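(* Let $x,y,z$ be fixed roots of unity different from $1$, and let $S\subseteq\mathbb{P}_3$ be the surface defined by $\mathcal{E}^*(a,b,c,d)=0$, where $\mathcal{E}^*$ is obtained from \[\mathcal{E}=B_2^2-A_1B_1B_2+(A_1^2-2A_2)B_2+A_2B_1^2-A_1A_2B_1+A_2^2\] by substituting $A_1=\tfrac{y-x}{y-1}a+\tfrac{xy-1}{y-1}b$, $A_2=xab$, $B_1=\tfrac{z-x}{z-1}c+\tfrac{xz-1}{z-1}d$, $B_2=xcd$. Then $S$ is defined over $\mathbb{Q}$ if and only if either $x^4=y^4=z^4=1$ or $x^6=y^6=z^6=1$.
   Context: $a,b,c,d$ are homogeneous coordinates on $\mathbb{P}_3$; $\mathcal{E}^*$ is homogeneous of degree $4$ with coefficients in $\mathbb{Q}(x,y,z)$. $S$ is defined over $\mathbb{Q}$ if $\mathcal{E}^*$ is a nonzero scalar multiple of a polynomial with rational coefficients. *)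

theory Defs
  imports Complex_Main "HOL-Library.Poly_Mapping"
begin

text \<open>Polynomials in the variables a,b,c,d (indices 0,1,2,3) with complex coefficients,
  represented as finitely supported maps from monomials (exponent vectors) to coefficients.\<close>

type_synonym cpoly = "(nat \<Rightarrow>\<^sub>0 nat) \<Rightarrow>\<^sub>0 complex"

definition PVar :: "nat \<Rightarrow> cpoly" where
  "PVar i = Poly_Mapping.single (Poly_Mapping.single i 1) 1"

definition PConst :: "complex \<Rightarrow> cpoly" where
  "PConst c = Poly_Mapping.single 0 c"

definition root_of_unity :: "complex \<Rightarrow> bool" where
  "root_of_unity w \<longleftrightarrow> (\<exists>n::nat. n > 0 \<and> w ^ n = 1)"

definition E_star :: "complex \<Rightarrow> complex \<Rightarrow> complex \<Rightarrow> cpoly" where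
  "E_star x y z =
    (let a = PVar 0; b = PVar 1; c = PVar 2; d = PVar 3;
         A1 = PConst ((y - x) / (y - 1)) * a + PConst ((x * y - 1) / (y - 1)) * b;
         A2 = PConst x * a * b;
         B1 = PConst ((z - x) / (z - 1)) * c + PConst ((x * z - 1) / (z - 1)) * d;
         B2 = PConst x * c * d
     in B2 ^ 2 - A1 * B1 * B2 + (A1 ^ 2 - 2 * A2) * B2 + A2 * B1 ^ 2
        - A1 * A2 * B1 + A2 ^ 2)"

definition defined_over_Q :: "cpoly \<Rightarrow> bool" where
  "defined_over_Q P \<longleftrightarrow>
     (\<exists>s::complex. \<exists>Q::cpoly. s \<noteq> 0 \<and> (\<forall>m. Poly_Mapping.lookup Q m \<in> \<rat>) \<and> P = PConst s * Q)"

end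

theory Submission
  imports Defs "HOL-Computational_Algebra.Polynomial"
begin

text \<open>
Expanding the substitution, the coefficients of \<open>E\<^sup>*\<close> divided by the coefficient \<open>x\<^sup>2\<close> of \<open>c\<^sup>2d\<^sup>2\<close>
are \<open>1\<close> and the nine numbers \<open>p\<^sup>2/x, q\<^sup>2/x, r\<^sup>2/x, s\<^sup>2/x, pr/x, ps/x, qr/x, qs/x, (pq + rs)/x\<close>,
where \<open>p, q, r, s\<close> are the coefficients of \<open>A\<^sub>1\<close> and \<open>B\<^sub>1\<close>. With the Cayley transforms
\<open>w = (y + 1)/(y - 1)\<close> and \<open>w' = (z + 1)/(z - 1)\<close> one has \<open>p, q = ((x + 1) \<plusminus> (1 - x) w)/2\<close>
and \<open>r, s = ((x + 1) \<plusminus> (1 - x) w')/2\<close>, so these ratios are linear combinations of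
\<open>x + 1/x\<close>, \<open>(x - 1/x) w\<close>, \<open>(x - 1/x) w'\<close>, \<open>w\<^sup>2\<close>, \<open>w'\<^sup>2\<close>, \<open>w w'\<close>, and the linear system can be
inverted over \<open>\<rat>\<close>. Since \<open>w = (y - 1/y)/(y + 1/y - 2)\<close>, the surface is defined over \<open>\<rat>\<close> iff the
traces \<open>u + 1/u\<close> (\<open>u = x, y, z\<close>) and the pairwise products of the numbers \<open>u - 1/u\<close> are rational.

The trace \<open>t\<close> of a root of unity is an algebraic integer (a root of \<open>D\<^sub>n(t) - 2\<close>, \<open>D\<^sub>n\<close> the
Dickson polynomial), so if rational it lies in \<open>{-2, -1, 0, 1}\<close>; then \<open>(u - 1/u)\<^sup>2 = t\<^sup>2 - 4\<close> lies in
\<open>{0, -3, -4}\<close>, and a product of two such square roots is rational unless its square is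
\<open>(-3)(-4) = 12\<close>. Traces in \<open>{-2, 0}\<close> belong to the fourth roots of unity, traces in
\<open>{-2, -1, 1}\<close> to the sixth roots of unity.
\<close>

lemma PConst_add: "PConst (a + b) = PConst a + PConst b"
  by (simp add: PConst_def single_add)

lemma PConst_diff: "PConst (a - b) = PConst a - PConst b"
  by (simp add: PConst_def single_diff)

lemma PConst_uminus: "PConst (- a) = - PConst a"
  by (simp add: PConst_def single_uminus)

lemma PConst_mult: "PConst (a * b) = PConst a * PConst b"
  by (simp add: PConst_def mult_single)

lemma PConst_numeral: "PConst (numeral n) = numeral n"
  by (simp add: PConst_def)

definition expvec :: "nat \<Rightarrow> nat \<Rightarrow> nat \<Rightarrow> nat \<Rightarrow> (nat \<Rightarrow>\<^sub>0 nat)" where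
  "expvec i j k l = Poly_Mapping.single 0 i + Poly_Mapping.single 1 j
     + Poly_Mapping.single 2 k + Poly_Mapping.single 3 l"

lemma expvec_eq_iff:
  "expvec i j k l = expvec i' j' k' l' \<longleftrightarrow> i = i' \<and> j = j' \<and> k = k' \<and> l = l'"
proof
  assume "expvec i j k l = expvec i' j' k' l'"
  from arg_cong[OF this, where f = "\<lambda>m. (Poly_Mapping.lookup m 0, Poly_Mapping.lookup m 1,
    Poly_Mapping.lookup m 2, Poly_Mapping.lookup m 3)"]
  show "i = i' \<and> j = j' \<and> k = k' \<and> l = l'"
    by (simp add: expvec_def lookup_add lookup_single)
qed simp

lemma PVar_power: "PVar i ^ n = Poly_Mapping.single (Poly_Mapping.single i n) 1"
  by (induction n) (simp_all add: PVar_def mult_single flip: single_add)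

lemma single_expvec:
  "Poly_Mapping.single (expvec i j k l) c = PConst c * PVar 0 ^ i * PVar 1 ^ j * PVar 2 ^ k * PVar 3 ^ l"
  by (simp add: PVar_power PConst_def mult_single expvec_def add.assoc)

definition E_expanded :: "complex \<Rightarrow> complex \<Rightarrow> complex \<Rightarrow> complex \<Rightarrow> complex \<Rightarrow> cpoly" where
  "E_expanded x p q r s =
     Poly_Mapping.single (expvec 0 0 2 2) (x * x) + Poly_Mapping.single (expvec 2 2 0 0) (x * x)
   + Poly_Mapping.single (expvec 2 0 1 1) (x * (p * p)) + Poly_Mapping.single (expvec 0 2 1 1) (x * (q * q))
   + Poly_Mapping.single (expvec 1 1 2 0) (x * (r * r)) + Poly_Mapping.single (expvec 1 1 0 2) (x * (s * s))
   + Poly_Mapping.single (expvec 1 0 2 1) (- x * p * r) + Poly_Mapping.single (expvec 2 1 1 0) (- x * p * r)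
   + Poly_Mapping.single (expvec 1 0 1 2) (- x * p * s) + Poly_Mapping.single (expvec 2 1 0 1) (- x * p * s)
   + Poly_Mapping.single (expvec 0 1 2 1) (- x * q * r) + Poly_Mapping.single (expvec 1 2 1 0) (- x * q * r)
   + Poly_Mapping.single (expvec 0 1 1 2) (- x * q * s) + Poly_Mapping.single (expvec 1 2 0 1) (- x * q * s)
   + Poly_Mapping.single (expvec 1 1 1 1) (2 * x * (p * q + r * s - x))"

lemma E_expanded_eq:
  "E_expanded x p q r s =
    (let a = PVar 0; b = PVar 1; c = PVar 2; d = PVar 3;
         A1 = PConst p * a + PConst q * b;
         A2 = PConst x * a * b;
         B1 = PConst r * c + PConst s * d;
         B2 = PConst x * c * d
     in B2 ^ 2 - A1 * B1 * B2 + (A1 ^ 2 - 2 * A2) * B2 + A2 * B1 ^ 2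
        - A1 * A2 * B1 + A2 ^ 2)"
  unfolding E_expanded_def single_expvec Let_def
  by (simp only: PConst_add PConst_diff PConst_uminus PConst_mult PConst_numeral) algebra

lemma E_star_eq_E_expanded:
  "E_star x y z =
    E_expanded x ((y - x) / (y - 1)) ((x * y - 1) / (y - 1)) ((z - x) / (z - 1)) ((x * z - 1) / (z - 1))"
  unfolding E_star_def E_expanded_eq ..

lemma lookup_PConst_mult: "Poly_Mapping.lookup (PConst c * P) m = c * Poly_Mapping.lookup P m"
  by (simp add: PConst_def Poly_Mapping.map.rep_eq when_def flip: mult_map_scale_conv_mult)

lemma defined_over_Q_iff_coeff_ratios:
  assumes m0: "Poly_Mapping.lookup P m0 \<noteq> 0"
  shows "defined_over_Q P \<longleftrightarrow> (\<forall>m. Poly_Mapping.lookup P m / Poly_Mapping.lookup P m0 \<in> \<rat>)"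
proof
  assume "defined_over_Q P"
  then obtain c Q where "\<forall>m. Poly_Mapping.lookup Q m \<in> \<rat>" "P = PConst c * Q"
    unfolding defined_over_Q_def by blast
  then show "\<forall>m. Poly_Mapping.lookup P m / Poly_Mapping.lookup P m0 \<in> \<rat>"
    by (simp add: lookup_PConst_mult)
next
  assume ratios: "\<forall>m. Poly_Mapping.lookup P m / Poly_Mapping.lookup P m0 \<in> \<rat>"
  define c where "c = Poly_Mapping.lookup P m0"
  have "P = PConst c * (PConst (inverse c) * P)"
    using m0 by (simp add: c_def mult.assoc flip: PConst_mult) (simp add: PConst_def)
  moreover have "\<forall>m. Poly_Mapping.lookup (PConst (inverse c) * P) m \<in> \<rat>"
    using ratios unfolding lookup_PConst_mult by (simp add: c_def divide_inverse mult.commute)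
  ultimately show "defined_over_Q P"
    using m0 unfolding defined_over_Q_def c_def by blast
qed

lemma when_divide_Rats: "(c::'a::field_char_0) / d \<in> \<rat> \<Longrightarrow> (c when P) / d \<in> \<rat>"
  by (cases P) simp_all

lemma defined_over_Q_E_expanded_iff:
  assumes "x \<noteq> 0"
  shows "defined_over_Q (E_expanded x p q r s) \<longleftrightarrow>
    p * p / x \<in> \<rat> \<and> q * q / x \<in> \<rat> \<and> r * r / x \<in> \<rat> \<and> s * s / x \<in> \<rat> \<and>
    p * r / x \<in> \<rat> \<and> p * s / x \<in> \<rat> \<and> q * r / x \<in> \<rat> \<and> q * s / x \<in> \<rat> \<and> (p * q + r * s) / x \<in> \<rat>"
    (is "_ \<longleftrightarrow> ?ratios")
proof -
  let ?E = "E_expanded x p q r s"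
  have lookups:
    "Poly_Mapping.lookup ?E (expvec 0 0 2 2) = x * x"
    "Poly_Mapping.lookup ?E (expvec 2 0 1 1) = x * (p * p)"
    "Poly_Mapping.lookup ?E (expvec 0 2 1 1) = x * (q * q)"
    "Poly_Mapping.lookup ?E (expvec 1 1 2 0) = x * (r * r)"
    "Poly_Mapping.lookup ?E (expvec 1 1 0 2) = x * (s * s)"
    "Poly_Mapping.lookup ?E (expvec 1 0 2 1) = - x * p * r"
    "Poly_Mapping.lookup ?E (expvec 1 0 1 2) = - x * p * s"
    "Poly_Mapping.lookup ?E (expvec 0 1 2 1) = - x * q * r"
    "Poly_Mapping.lookup ?E (expvec 0 1 1 2) = - x * q * s"
    "Poly_Mapping.lookup ?E (expvec 1 1 1 1) = 2 * x * (p * q + r * s - x)"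
    by (simp_all add: E_expanded_def lookup_add lookup_single expvec_eq_iff)
  then have "defined_over_Q ?E \<longleftrightarrow> (\<forall>m. Poly_Mapping.lookup ?E m / (x * x) \<in> \<rat>)"
    using assms defined_over_Q_iff_coeff_ratios[of ?E "expvec 0 0 2 2"] by simp
  also have "\<dots> \<longleftrightarrow> ?ratios"
  proof
    assume "\<forall>m. Poly_Mapping.lookup ?E m / (x * x) \<in> \<rat>"
    then have ratio: "c / (x * x) \<in> \<rat>" if "Poly_Mapping.lookup ?E m = c" for m c
      using that by auto
    have "(p * q + r * s) / x = (2 * x * (p * q + r * s - x) / (x * x) + 2) / 2"
      using assms by (simp add: field_simps)
    also have "\<dots> \<in> \<rat>"
      using ratio[OF lookups(10)] by simp
    finally show ?ratios
      using ratio[OF lookups(2)] ratio[OF lookups(3)] ratio[OF lookups(4)] ratio[OF lookups(5)]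
        ratio[OF lookups(6)] ratio[OF lookups(7)] ratio[OF lookups(8)] ratio[OF lookups(9)] assms
      by simp
  next
    assume ratios: ?ratios
    have "2 * x * (p * q + r * s - x) / (x * x) = 2 * ((p * q + r * s) / x) - 2"
      using assms by (simp add: field_simps)
    also have "\<dots> \<in> \<rat>"
      using ratios by (intro Rats_diff Rats_mult) simp_all
    finally show "\<forall>m. Poly_Mapping.lookup ?E m / (x * x) \<in> \<rat>"
      using ratios assms unfolding E_expanded_def lookup_add lookup_single add_divide_distrib
      by (intro allI Rats_add when_divide_Rats) simp_all
  qed
  finally show ?thesis .
qed

definition plus_inv :: "'a::field \<Rightarrow> 'a" where
  "plus_inv u = u + inverse u"

definition minus_inv :: "'a::field \<Rightarrow> 'a" where
  "minus_inv u = u - inverse u"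

lemma plus_inv_eq_iff: "u \<noteq> 0 \<Longrightarrow> plus_inv u = t \<longleftrightarrow> u\<^sup>2 - t * u + 1 = 0"
  by (auto simp: plus_inv_def field_simps power2_eq_square)

lemma plus_inv_neq_2: "u \<noteq> 0 \<Longrightarrow> u \<noteq> 1 \<Longrightarrow> plus_inv u \<noteq> 2"
proof -
  have "u\<^sup>2 - 2 * u + 1 = (u - 1)\<^sup>2"
    by (simp add: power2_eq_square algebra_simps)
  then show "u \<noteq> 0 \<Longrightarrow> u \<noteq> 1 \<Longrightarrow> plus_inv u \<noteq> 2"
    by (simp add: plus_inv_eq_iff)
qed

lemma minus_inv_squared: "u \<noteq> 0 \<Longrightarrow> (minus_inv u)\<^sup>2 = (plus_inv u)\<^sup>2 - 4"
  by (simp add: plus_inv_def minus_inv_def power2_eq_square algebra_simps)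

lemma cayley_eq_minus_inv_div:
  assumes "u \<noteq> 0" "u \<noteq> 1"
  shows "(u + 1) / (u - 1) = minus_inv u / (plus_inv u - 2)"
proof -
  have "minus_inv u = (u + 1) * (u - 1) / u" "plus_inv u - 2 = (u - 1) * (u - 1) / u"
    using assms by (simp_all add: plus_inv_def minus_inv_def field_simps)
  then show ?thesis
    using assms by simp
qed

lemma cayley_squared:
  assumes "u \<noteq> 0" "u \<noteq> 1"
  shows "((u + 1) / (u - 1))\<^sup>2 = (plus_inv u + 2) / (plus_inv u - 2)"
proof -
  have "plus_inv u - 2 \<noteq> 0"
    using plus_inv_neq_2[OF assms] by simp
  have "((u + 1) / (u - 1))\<^sup>2 = ((plus_inv u)\<^sup>2 - 4) / (plus_inv u - 2)\<^sup>2"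
    using assms by (simp add: cayley_eq_minus_inv_div power_divide minus_inv_squared)
  also have "\<dots> = (plus_inv u + 2) / (plus_inv u - 2)"
  proof -
    have "(plus_inv u)\<^sup>2 - 4 = (plus_inv u + 2) * (plus_inv u - 2)"
      by (simp add: power2_eq_square algebra_simps)
    then show ?thesis
      using \<open>plus_inv u - 2 \<noteq> 0\<close> by (simp add: power2_eq_square)
  qed
  finally show ?thesis .
qed

lemma Rats_moebius_iff: "(t::'a::field_char_0) \<noteq> 2 \<Longrightarrow> (t + 2) / (t - 2) \<in> \<rat> \<longleftrightarrow> t \<in> \<rat>"
proof -
  assume "t \<noteq> 2"
  then have "(t + 2) / (t - 2) = 1 + 4 / (t - 2)" and "t = 2 + 4 / ((t + 2) / (t - 2) - 1)"
    by (simp_all add: field_simps)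
  then show ?thesis
    by (metis Rats_1 Rats_add Rats_diff Rats_divide Rats_number_of)
qed

lemma quadratic_form_ratios:
  fixes x \<alpha> \<beta> :: "'a::field_char_0"
  assumes "x \<noteq> 0"
  shows "4 * (((x + 1) + (1 - x) * \<alpha>) / 2 * (((x + 1) + (1 - x) * \<beta>) / 2) / x)
    = (plus_inv x + 2) - minus_inv x * (\<alpha> + \<beta>) + (plus_inv x - 2) * (\<alpha> * \<beta>)"
  using assms by (simp add: plus_inv_def minus_inv_def field_simps)

lemma coefficient_ratios_Rats_iff:
  fixes x w w' p q r s :: "'a::field_char_0"
  assumes x: "x \<noteq> 0" "plus_inv x \<noteq> 2"
    and p: "p = ((x + 1) + (1 - x) * w) / 2" and q: "q = ((x + 1) - (1 - x) * w) / 2"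
    and r: "r = ((x + 1) + (1 - x) * w') / 2" and s: "s = ((x + 1) - (1 - x) * w') / 2"
  shows "(p * p / x \<in> \<rat> \<and> q * q / x \<in> \<rat> \<and> r * r / x \<in> \<rat> \<and> s * s / x \<in> \<rat> \<and>
      p * r / x \<in> \<rat> \<and> p * s / x \<in> \<rat> \<and> q * r / x \<in> \<rat> \<and> q * s / x \<in> \<rat> \<and> (p * q + r * s) / x \<in> \<rat>)
    \<longleftrightarrow> plus_inv x \<in> \<rat> \<and> minus_inv x * w \<in> \<rat> \<and> minus_inv x * w' \<in> \<rat> \<and>
      w * w \<in> \<rat> \<and> w' * w' \<in> \<rat> \<and> w * w' \<in> \<rat>"
proof -
  define c v where "c = plus_inv x" and "v = minus_inv x"
  define P Q R S PR PS QR QS PQ_RS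
    where "P = p * p / x" and "Q = q * q / x" and "R = r * r / x" and "S = s * s / x"
      and "PR = p * r / x" and "PS = p * s / x" and "QR = q * r / x" and "QS = q * s / x"
      and "PQ_RS = (p * q + r * s) / x"
  have q': "q = ((x + 1) + (1 - x) * (- w)) / 2" and s': "s = ((x + 1) + (1 - x) * (- w')) / 2"
    using q s by simp_all
  note form = quadratic_form_ratios[OF x(1), folded c_def v_def]
  have pp: "4 * P = (c + 2) - 2 * (v * w) + (c - 2) * (w * w)"
    and qq: "4 * Q = (c + 2) + 2 * (v * w) + (c - 2) * (w * w)"
    and rr: "4 * R = (c + 2) - 2 * (v * w') + (c - 2) * (w' * w')"
    and ss: "4 * S = (c + 2) + 2 * (v * w') + (c - 2) * (w' * w')"
    and pr: "4 * PR = (c + 2) - (v * w + v * w') + (c - 2) * (w * w')"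
    and ps: "4 * PS = (c + 2) - (v * w - v * w') - (c - 2) * (w * w')"
    and qr: "4 * QR = (c + 2) + (v * w - v * w') - (c - 2) * (w * w')"
    and qs: "4 * QS = (c + 2) + (v * w + v * w') + (c - 2) * (w * w')"
    and pq: "4 * (p * q / x) = (c + 2) - (c - 2) * (w * w)"
    and rs: "4 * (r * s / x) = (c + 2) - (c - 2) * (w' * w')"
    using form[of w w] form[of "-w" "-w"] form[of w' w'] form[of "-w'" "-w'"]
      form[of w w'] form[of w "-w'"] form[of "-w" w'] form[of "-w" "-w'"]
      form[of w "-w"] form[of w' "-w'"]
    unfolding P_def Q_def R_def S_def PR_def PS_def QR_def QS_def p r q' s'
    by (simp_all add: algebra_simps)
  have pq_rs: "4 * PQ_RS = 2 * (c + 2) - (c - 2) * (w * w) - (c - 2) * (w' * w')"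
    using pq rs by (simp add: PQ_RS_def add_divide_distrib distrib_left)
  have "c - 2 \<noteq> 0"
    using x(2) by (simp add: c_def)
  have "(P \<in> \<rat> \<and> Q \<in> \<rat> \<and> R \<in> \<rat> \<and> S \<in> \<rat> \<and> PR \<in> \<rat> \<and> PS \<in> \<rat> \<and> QR \<in> \<rat> \<and> QS \<in> \<rat> \<and> PQ_RS \<in> \<rat>)
    \<longleftrightarrow> c \<in> \<rat> \<and> v * w \<in> \<rat> \<and> v * w' \<in> \<rat> \<and> w * w \<in> \<rat> \<and> w' * w' \<in> \<rat> \<and> w * w' \<in> \<rat>"
    (is "?ratios \<longleftrightarrow> ?params")
  proof
    assume ?ratios
    have "c = (P + Q + R + S) / 2 + PQ_RS - 2"
      using pp qq rr ss pq_rs by algebra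
    moreover have "v * w = Q - P" "v * w' = S - R"
      using pp qq rr ss by algebra+
    moreover have "(c - 2) * (w * w) = 2 * (P + Q) - (c + 2)"
      and "(c - 2) * (w' * w') = 2 * (R + S) - (c + 2)"
      and "(c - 2) * (w * w') = 4 * PR - (c + 2) + (v * w + v * w')"
      using pp qq rr ss pr by algebra+
    then have "w * w = (2 * (P + Q) - (c + 2)) / (c - 2)"
      and "w' * w' = (2 * (R + S) - (c + 2)) / (c - 2)"
      and "w * w' = (4 * PR - (c + 2) + (v * w + v * w')) / (c - 2)"
      using \<open>c - 2 \<noteq> 0\<close> by (simp_all add: nonzero_eq_divide_eq mult.commute)
    ultimately show ?params
      using \<open>?ratios\<close> by simp
  next
    assume ?params
    have quarter: "a \<in> \<rat>" if "4 * a = b" "b \<in> \<rat>" for a b :: 'a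
      using that by (metis Rats_divide Rats_number_of nonzero_mult_div_cancel_left zero_neq_numeral)
    show ?ratios
      using \<open>?params\<close>
      by (intro conjI quarter[OF pp] quarter[OF qq] quarter[OF rr] quarter[OF ss] quarter[OF pr]
          quarter[OF ps] quarter[OF qr] quarter[OF qs] quarter[OF pq_rs]) simp_all
  qed
  then show ?thesis
    by (simp only: c_def v_def P_def Q_def R_def S_def PR_def PS_def QR_def QS_def PQ_RS_def)
qed

lemma E_star_defined_over_Q_iff:
  fixes x y z :: complex
  assumes x: "x \<noteq> 0" "x \<noteq> 1" and y: "y \<noteq> 0" "y \<noteq> 1" and z: "z \<noteq> 0" "z \<noteq> 1"
  shows "defined_over_Q (E_star x y z) \<longleftrightarrow>
    plus_inv x \<in> \<rat> \<and> plus_inv y \<in> \<rat> \<and> plus_inv z \<in> \<rat> \<and>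
    minus_inv x * minus_inv y \<in> \<rat> \<and> minus_inv x * minus_inv z \<in> \<rat> \<and> minus_inv y * minus_inv z \<in> \<rat>"
proof -
  define w w' where "w = (y + 1) / (y - 1)" and "w' = (z + 1) / (z - 1)"
  have "defined_over_Q (E_star x y z) \<longleftrightarrow>
    plus_inv x \<in> \<rat> \<and> minus_inv x * w \<in> \<rat> \<and> minus_inv x * w' \<in> \<rat> \<and>
      w * w \<in> \<rat> \<and> w' * w' \<in> \<rat> \<and> w * w' \<in> \<rat>"
    unfolding E_star_eq_E_expanded defined_over_Q_E_expanded_iff[OF x(1)]
    using x y z
    by (intro coefficient_ratios_Rats_iff) (simp_all add: w_def w'_def plus_inv_neq_2 field_simps)
  also have "\<dots> \<longleftrightarrow> plus_inv x \<in> \<rat> \<and> plus_inv y \<in> \<rat> \<and> plus_inv z \<in> \<rat> \<and>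
    minus_inv x * minus_inv y \<in> \<rat> \<and> minus_inv x * minus_inv z \<in> \<rat> \<and> minus_inv y * minus_inv z \<in> \<rat>"
  proof -
    have "plus_inv y \<noteq> 2" "plus_inv z \<noteq> 2"
      using y z by (simp_all add: plus_inv_neq_2)
    moreover have "w * w \<in> \<rat> \<longleftrightarrow> plus_inv y \<in> \<rat>" "w' * w' \<in> \<rat> \<longleftrightarrow> plus_inv z \<in> \<rat>"
      using y z cayley_squared[of y] cayley_squared[of z] plus_inv_neq_2[of y] plus_inv_neq_2[of z]
      by (simp_all add: w_def w'_def power2_eq_square Rats_moebius_iff)
    moreover have "minus_inv x * w = minus_inv x * minus_inv y / (plus_inv y - 2)"
      and "minus_inv x * w' = minus_inv x * minus_inv z / (plus_inv z - 2)"
      and "w * w' = minus_inv y * minus_inv z / ((plus_inv y - 2) * (plus_inv z - 2))"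
      using y z by (simp_all add: w_def w'_def cayley_eq_minus_inv_div)
    ultimately show ?thesis
      by (auto simp: Rats_divide_iff)
  qed
  finally show ?thesis .
qed

lemma root_of_unity_nonzero: "root_of_unity u \<Longrightarrow> u \<noteq> 0"
  by (auto simp: root_of_unity_def power_0_left)

fun dickson_poly :: "nat \<Rightarrow> 'a::comm_ring_1 poly" where
  "dickson_poly 0 = [:2:]"
| "dickson_poly (Suc 0) = [:0, 1:]"
| "dickson_poly (Suc (Suc n)) = pCons 0 (dickson_poly (Suc n)) - dickson_poly n"

lemma poly_dickson_poly_plus_inv:
  fixes u :: "'a::field"
  assumes "u \<noteq> 0"
  shows "poly (dickson_poly n) (plus_inv u) = u ^ n + inverse u ^ n"
proof (induction n rule: dickson_poly.induct)
  case (3 n)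
  then show ?case
    using assms by (simp add: plus_inv_def field_simps)
qed (simp_all add: plus_inv_def)

lemma dickson_poly_coeff_Ints: "coeff (dickson_poly n) i \<in> \<int>"
  by (induction n arbitrary: i rule: dickson_poly.induct) (auto simp: coeff_pCons split: nat.split)

lemma degree_dickson_poly_le: "degree (dickson_poly n) \<le> n"
  by (induction n rule: dickson_poly.induct) (auto intro: degree_diff_le)

lemma coeff_dickson_poly_top: "n > 0 \<Longrightarrow> coeff (dickson_poly n) n = 1"
proof (induction n rule: dickson_poly.induct)
  case (3 n)
  have "coeff (dickson_poly n) (Suc (Suc n)) = 0"
    by (intro coeff_eq_0 le_less_trans[OF degree_dickson_poly_le]) simp
  then show ?case
    using 3 by simp
qed simp_all

lemma lead_coeff_dickson_poly: "n > 0 \<Longrightarrow> lead_coeff (dickson_poly n :: 'a::comm_ring_1 poly) = 1"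
  and degree_dickson_poly: "n > 0 \<Longrightarrow> degree (dickson_poly n :: 'a::comm_ring_1 poly) = n"
proof -
  assume "n > 0"
  then have "coeff (dickson_poly n :: 'a poly) n = 1"
    by (rule coeff_dickson_poly_top)
  then show "degree (dickson_poly n :: 'a poly) = n"
    using degree_dickson_poly_le[of n] by (metis le_degree le_antisym one_neq_zero)
  then show "lead_coeff (dickson_poly n :: 'a poly) = 1"
    using \<open>coeff _ n = 1\<close> by simp
qed

lemma algebraic_int_plus_inv:
  fixes u :: "'a::field_char_0"
  assumes "u ^ n = 1" "n > 0"
  shows "algebraic_int (plus_inv u)"
proof (rule algebraic_int_root)
  have "u \<noteq> 0"
    using assms by (metis power_0_left zero_neq_one less_not_refl)
  then show "poly (dickson_poly n) (plus_inv u) = 2"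
    using assms(1) by (simp add: poly_dickson_poly_plus_inv power_inverse)
qed (use assms in \<open>simp_all add: dickson_poly_coeff_Ints lead_coeff_dickson_poly degree_dickson_poly coeff_dickson_poly_top\<close>)

lemma plus_inv_root_of_unity_Rats_iff:
  fixes u :: complex
  assumes "root_of_unity u" "u \<noteq> 1"
  shows "plus_inv u \<in> \<rat> \<longleftrightarrow> plus_inv u \<in> {-2, -1, 0, 1}"
proof
  obtain n where n: "n > 0" "u ^ n = 1"
    using assms(1) unfolding root_of_unity_def by blast
  have "u \<noteq> 0"
    using assms(1) by (rule root_of_unity_nonzero)
  assume "plus_inv u \<in> \<rat>"
  then have "plus_inv u \<in> \<int>"
    using algebraic_int_plus_inv[OF n(2,1)] by (intro rational_algebraic_int_is_int)
  then obtain k where k: "plus_inv u = of_int k"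
    by (elim Ints_cases)
  have "norm u ^ n = 1"
    using n(2) by (metis norm_one norm_power)
  then have "norm u = 1"
    using n(1) power_eq_iff_eq_base[of n "norm u" 1] by simp
  then have "norm (plus_inv u) \<le> 2"
    using norm_triangle_ineq[of u "inverse u"] by (simp add: plus_inv_def norm_inverse)
  moreover have "plus_inv u \<noteq> 2"
    using \<open>u \<noteq> 0\<close> assms(2) by (rule plus_inv_neq_2)
  ultimately have "\<bar>k\<bar> \<le> 2" "k \<noteq> 2"
    unfolding k by simp_all
  then have "k \<in> {-2, -1, 0, 1}"
    by auto
  then show "plus_inv u \<in> {-2, -1, 0, 1}"
    using k by auto
qed auto

lemma plus_inv_eq_neg2_iff: "u \<noteq> 0 \<Longrightarrow> plus_inv u = -2 \<longleftrightarrow> u = -1"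
proof -
  have "u\<^sup>2 - (-2) * u + 1 = (u + 1)\<^sup>2"
    by algebra
  then show "u \<noteq> 0 \<Longrightarrow> plus_inv u = -2 \<longleftrightarrow> u = -1"
    by (simp add: plus_inv_eq_iff add_eq_0_iff2)
qed

lemma power4_eq_1_iff_plus_inv:
  fixes u :: "'a::field"
  assumes "u \<noteq> 0" "u \<noteq> 1"
  shows "u ^ 4 = 1 \<longleftrightarrow> plus_inv u \<in> {-2, 0}"
proof -
  have "u ^ 4 - 1 = (u - 1) * ((u + 1) * (u\<^sup>2 + 1))"
    by algebra
  then have "u ^ 4 = 1 \<longleftrightarrow> u + 1 = 0 \<or> u\<^sup>2 + 1 = 0"
    using assms(2) by (simp only: eq_iff_diff_eq_0[of "u ^ 4"] mult_eq_0_iff right_minus_eq simp_thms)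
  also have "\<dots> \<longleftrightarrow> plus_inv u = -2 \<or> plus_inv u = 0"
    using plus_inv_eq_neg2_iff[OF assms(1)] plus_inv_eq_iff[OF assms(1), of 0]
    by (simp add: add_eq_0_iff2)
  finally show ?thesis
    by blast
qed

lemma power6_eq_1_iff_plus_inv:
  fixes u :: "'a::field"
  assumes "u \<noteq> 0" "u \<noteq> 1"
  shows "u ^ 6 = 1 \<longleftrightarrow> plus_inv u \<in> {-2, -1, 1}"
proof -
  have "u ^ 6 - 1 = (u - 1) * ((u + 1) * ((u\<^sup>2 - (-1) * u + 1) * (u\<^sup>2 - 1 * u + 1)))"
    by algebra
  then have "u ^ 6 = 1 \<longleftrightarrow> u + 1 = 0 \<or> u\<^sup>2 - (-1) * u + 1 = 0 \<or> u\<^sup>2 - 1 * u + 1 = 0"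
    using assms(2) by (simp only: eq_iff_diff_eq_0[of "u ^ 6"] mult_eq_0_iff right_minus_eq simp_thms)
  also have "\<dots> \<longleftrightarrow> plus_inv u = -2 \<or> plus_inv u = -1 \<or> plus_inv u = 1"
    using plus_inv_eq_neg2_iff[OF assms(1)] plus_inv_eq_iff[OF assms(1), of "-1"]
      plus_inv_eq_iff[OF assms(1), of 1]
    by (simp only: add_eq_0_iff2)
  finally show ?thesis
    by blast
qed

lemma Ints_of_Rats_power2:
  fixes v :: "'a::field_char_0"
  assumes "v \<in> \<rat>" "v\<^sup>2 \<in> \<int>"
  shows "v \<in> \<int>"
proof (rule rational_algebraic_int_is_int[OF _ assms(1)],
    rule algebraic_int_root[where y = "v\<^sup>2" and p = "monom 1 2"])
  show "algebraic_int (v\<^sup>2)"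
    using assms(2) by (rule int_imp_algebraic_int)
  show "\<forall>i. coeff (monom 1 2) i \<in> \<int>"
    by (simp add: coeff_monom)
qed (simp_all add: poly_monom degree_monom_eq)

lemma int_power2_neq_12: "(k::int)\<^sup>2 \<noteq> 12"
proof
  assume "k\<^sup>2 = 12"
  then have "\<bar>k\<bar>\<^sup>2 = 12"
    by simp
  moreover have "\<bar>k\<bar>\<^sup>2 \<le> 3\<^sup>2" if "\<bar>k\<bar> \<le> 3"
    using that by (intro power_mono) simp_all
  moreover have "4\<^sup>2 \<le> \<bar>k\<bar>\<^sup>2" if "4 \<le> \<bar>k\<bar>"
    using that by (intro power_mono) simp_all
  moreover have "(3::int)\<^sup>2 = 9" "(4::int)\<^sup>2 = 16"
    by simp_all
  ultimately show False
    by linarith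
qed

lemma Rats_power2_neq_12:
  fixes v :: "'a::field_char_0"
  assumes "v \<in> \<rat>"
  shows "v\<^sup>2 \<noteq> 12"
proof
  assume sq: "v\<^sup>2 = 12"
  then have "v \<in> \<int>"
    using assms Ints_of_Rats_power2[of v] by simp
  then obtain k where "v = of_int k"
    by (elim Ints_cases)
  with sq have "of_int (k\<^sup>2) = (of_int 12 :: 'a)"
    by (simp only: of_int_power of_int_numeral)
  then show False
    using int_power2_neq_12[of k] by (simp only: of_int_eq_iff)
qed

lemma minus_inv_mult_Rats_iff:
  fixes u v :: "'a::field_char_0"
  assumes "u \<noteq> 0" "v \<noteq> 0" "plus_inv u \<in> {-2, -1, 0, 1}" "plus_inv v \<in> {-2, -1, 0, 1}"
  shows "minus_inv u * minus_inv v \<in> \<rat> \<longleftrightarrow> ((plus_inv u)\<^sup>2 - 4) * ((plus_inv v)\<^sup>2 - 4) \<noteq> 12"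
proof -
  define P where "P = ((plus_inv u)\<^sup>2 - 4) * ((plus_inv v)\<^sup>2 - 4)"
  have sq: "(minus_inv u * minus_inv v)\<^sup>2 = P"
    using assms(1,2) by (simp add: P_def power_mult_distrib minus_inv_squared)
  have "P = 0\<^sup>2 \<or> P = 3\<^sup>2 \<or> P = 4\<^sup>2 \<or> P = 12"
    using assms(3,4) by (auto simp: P_def)
  then consider k :: 'a where "k \<in> {0, 3, 4}" "P = k\<^sup>2" | "P = 12"
    by blast
  then show ?thesis
  proof cases
    case (1 k)
    then have "minus_inv u * minus_inv v = k \<or> minus_inv u * minus_inv v = - k"
      using sq by (simp add: power2_eq_iff)
    moreover have "k \<in> \<rat>" "P \<noteq> 12"
      using 1 by auto
    ultimately show ?thesis
      by (auto simp: P_def)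
  next
    case 2
    then show ?thesis
      using sq Rats_power2_neq_12 by (auto simp: P_def)
  qed
qed

lemma pairwise_products_neq_12_iff:
  fixes a b c :: "'a::field_char_0"
  shows "(a \<in> {-2, -1, 0, 1} \<and> b \<in> {-2, -1, 0, 1} \<and> c \<in> {-2, -1, 0, 1} \<and>
      (a\<^sup>2 - 4) * (b\<^sup>2 - 4) \<noteq> 12 \<and> (a\<^sup>2 - 4) * (c\<^sup>2 - 4) \<noteq> 12 \<and> (b\<^sup>2 - 4) * (c\<^sup>2 - 4) \<noteq> 12)
    \<longleftrightarrow> (a \<in> {-2, 0} \<and> b \<in> {-2, 0} \<and> c \<in> {-2, 0}) \<or> (a \<in> {-2, -1, 1} \<and> b \<in> {-2, -1, 1} \<and> c \<in> {-2, -1, 1})"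
  by auto

theorem propositionA3:
  fixes x y z :: complex
  assumes "root_of_unity x" "root_of_unity y" "root_of_unity z"
    and "x \<noteq> 1" "y \<noteq> 1" "z \<noteq> 1"
  shows "defined_over_Q (E_star x y z) \<longleftrightarrow>
           ((x ^ 4 = 1 \<and> y ^ 4 = 1 \<and> z ^ 4 = 1) \<or> (x ^ 6 = 1 \<and> y ^ 6 = 1 \<and> z ^ 6 = 1))"
proof -
  have nonzero: "x \<noteq> 0" "y \<noteq> 0" "z \<noteq> 0"
    using assms(1-3) by (simp_all add: root_of_unity_nonzero)
  let ?S = "{-2, -1, 0, 1} :: complex set"
  have "defined_over_Q (E_star x y z) \<longleftrightarrow>
      plus_inv x \<in> ?S \<and> plus_inv y \<in> ?S \<and> plus_inv z \<in> ?S \<and>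
      minus_inv x * minus_inv y \<in> \<rat> \<and> minus_inv x * minus_inv z \<in> \<rat> \<and> minus_inv y * minus_inv z \<in> \<rat>"
    using assms nonzero by (simp add: E_star_defined_over_Q_iff plus_inv_root_of_unity_Rats_iff)
  also have "\<dots> \<longleftrightarrow> plus_inv x \<in> ?S \<and> plus_inv y \<in> ?S \<and> plus_inv z \<in> ?S \<and>
      ((plus_inv x)\<^sup>2 - 4) * ((plus_inv y)\<^sup>2 - 4) \<noteq> 12 \<and> ((plus_inv x)\<^sup>2 - 4) * ((plus_inv z)\<^sup>2 - 4) \<noteq> 12 \<and>
      ((plus_inv y)\<^sup>2 - 4) * ((plus_inv z)\<^sup>2 - 4) \<noteq> 12"
    using nonzero minus_inv_mult_Rats_iff by blast
  also have "\<dots> \<longleftrightarrow> (plus_inv x \<in> {-2, 0} \<and> plus_inv y \<in> {-2, 0} \<and> plus_inv z \<in> {-2, 0}) \<or>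
      (plus_inv x \<in> {-2, -1, 1} \<and> plus_inv y \<in> {-2, -1, 1} \<and> plus_inv z \<in> {-2, -1, 1})"
    by (rule pairwise_products_neq_12_iff)
  also have "\<dots> \<longleftrightarrow> (x ^ 4 = 1 \<and> y ^ 4 = 1 \<and> z ^ 4 = 1) \<or> (x ^ 6 = 1 \<and> y ^ 6 = 1 \<and> z ^ 6 = 1)"
    using assms nonzero by (simp add: power4_eq_1_iff_plus_inv power6_eq_1_iff_plus_inv)
  finally show ?thesis .
qed

end
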